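(* Let $\Gamma_2(t)=\mathbb{A}(t)+\varepsilon^*\mathbb{A}^*(t)$ be a differentiable curve in the unit hyper-dual sphere $\mathbb{S}^2_{\mathbb{D}_2}$, with $\mathbb{A}=\mathbf a_0+\varepsilon\mathbf a_1$ and $\mathbb{A}^*=\mathbf a_2+\varepsilon\mathbf a_3$ ($\mathbf a_i(t)\in\mathbb{R}^3$). Let $\Phi_2(t,\mathbb{U})=\mathbb{A}(t)\times\mathbb{A}^*(t)+\mathbb{U}\,\mathbb{A}(t)$, $\mathbb{U}\in D$, be its corresponding ruled surface in $\mathbb{D}$. Then $\Phi_2$ is developable if and only if, for all $t$, $$\mathbf a_0'\cdot\mathbf a_2'=0\quad\text{and}\quad \mathbf a_0'\cdot\mathbf a_3'=-\mathbf a_1'\cdot\mathbf a_2'.$$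
   Context: Dual numbers $D=\{a+\varepsilon a^*\}$, $\varepsilon^2=0$, $\varepsilon\ne0$. Dual vectors $\mathbb{D}=\{\mathbf a+\varepsilon\mathbf a^*:\mathbf a,\mathbf a^*\in\mathbb{R}^3\}$ with $D$-valued inner product $\langle\mathbf a+\varepsilon\mathbf a^*,\mathbf b+\varepsilon\mathbf b^*\rangle=\mathbf a\cdot\mathbf b+\varepsilon(\mathbf a^*\cdot\mathbf b+\mathbf a\cdot\mathbf b^* )$, cross product $(\mathbf a+\varepsilon\mathbf a^* )\times(\mathbf b+\varepsilon\mathbf b^* )=\mathbf a\times\mathbf b+\varepsilon(\mathbf a\times\mathbf b^*+\mathbf a^*\times\mathbf b)$, scalar multiplication by dual numbers $(u+\varepsilon u^* )(\mathbf a+\varepsilon\mathbf a^* )=u\mathbf a+\varepsilon(u\mathbf a^*+u^*\mathbf a)$, and dual determinant $\det(X,Y,Z)=\langle X,Y\times Z\rangle$. Hyper-dual vectors $\mathbb{D}_2=\{\mathbb{A}+\varepsilon^*\mathbb{A}^*:\mathbb{A},\mathbb{A}^*\in\mathbb{D}\}$ with $\varepsilon^{*2}=0$, $\varepsilon\varepsilon^*=\varepsilon^*\varepsilon\ne0$. Unit hyper-dual sphere: $\mathbb{S}^2_{\mathbb{D}_2}=\{\mathbb{A}+\varepsilon^*\mathbb{A}^*:\langle\mathbb{A},\mathbb{A}\rangle=1,\ \langle\mathbb{A},\mathbb{A}^*\rangle=0\}$. A ruled surface in $\mathbb{D}$ is $\Phi(t,\mathbb{U})=\mathbb{B}(t)+\mathbb{U}\,\mathbb{B}^*(t)$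 with $\mathbb{B},\mathbb{B}^*$ curves in $\mathbb{D}$ and $\mathbb{U}\in D$; it is called developable if $\det(\mathbb{B}'(t),\mathbb{B}^*(t),\mathbb{B}^{*\prime}(t))=0$ (as a dual number) for all $t$. Derivatives are componentwise. *)

theory Defs
  imports "HOL-Analysis.Analysis" "HOL-Analysis.Cross3"
begin

text \<open>Dual numbers a + eps a* are pairs (a, a*) of reals; dual vectors
  A + eps A* are pairs (A, A*) of vectors in real^3.
  Hyper-dual vectors AA + eps* AA* are pairs of dual vectors.\<close>

type_synonym dnum = "real \<times> real"
type_synonym dvec = "(real^3) \<times> (real^3)"
type_synonym hdvec = "dvec \<times> dvec"

definition dinner :: "dvec \<Rightarrow> dvec \<Rightarrow> dnum" where
  "dinner X Y = (fst X \<bullet> fst Y, snd X \<bullet> fst Y + fst X \<bullet> snd Y)"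

definition dcross :: "dvec \<Rightarrow> dvec \<Rightarrow> dvec" where
  "dcross X Y = (cross3 (fst X) (fst Y),
                 cross3 (fst X) (snd Y) + cross3 (snd X) (fst Y))"

definition dscale :: "dnum \<Rightarrow> dvec \<Rightarrow> dvec" where
  "dscale u X = (fst u *\<^sub>R fst X, fst u *\<^sub>R snd X + snd u *\<^sub>R fst X)"

definition dadd :: "dvec \<Rightarrow> dvec \<Rightarrow> dvec" where
  "dadd X Y = (fst X + fst Y, snd X + snd Y)"

definition ddet :: "dvec \<Rightarrow> dvec \<Rightarrow> dvec \<Rightarrow> dnum" where
  "ddet X Y Z = dinner X (dcross Y Z)"

definition dderiv :: "(real \<Rightarrow> dvec) \<Rightarrow> real \<Rightarrow> dvec" where
  "dderiv c t = (vector_derivative (\<lambda>s. fst (c s)) (at t),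
                 vector_derivative (\<lambda>s. snd (c s)) (at t))"

definition hd_unit_sphere :: "hdvec set" where
  "hd_unit_sphere = {(A, As). dinner A A = (1, 0) \<and> dinner A As = (0, 0)}"

definition ruled_surface :: "(real \<Rightarrow> dvec) \<Rightarrow> (real \<Rightarrow> dvec) \<Rightarrow> real \<Rightarrow> dnum \<Rightarrow> dvec" where
  "ruled_surface B Bs t U = dadd (B t) (dscale U (Bs t))"

definition developable :: "(real \<Rightarrow> dvec) \<Rightarrow> (real \<Rightarrow> dvec) \<Rightarrow> bool" where
  "developable B Bs \<longleftrightarrow> (\<forall>t. ddet (dderiv B t) (Bs t) (dderiv Bs t) = (0, 0))"

end

theory Submission
  imports Defs
begin

text \<open>Let \<open>A\<close> be the unit dual director and \<open>B = A \<times> A*\<close> the base curve. By the product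
  rule \<open>det(B', A, A') = \<langle>A' \<times> A* + A \<times> A*', A \<times> A'\<rangle>\<close>, and the Lagrange identity, which
  holds verbatim over the dual numbers, evaluates both terms: the first vanishes since
  \<open>\<langle>A, A'\<rangle> = 0\<close> (differentiate \<open>\<langle>A, A\<rangle> = 1\<close>) and \<open>\<langle>A, A*\<rangle> = 0\<close>, the second equals
  \<open>\<langle>A', A*'\<rangle>\<close> since \<open>\<langle>A, A\<rangle> = 1\<close>. So the surface is developable iff \<open>\<langle>A', A*'\<rangle> = 0\<close>,
  whose real and dual parts are the two stated conditions.\<close>

definition dmult :: "dnum \<Rightarrow> dnum \<Rightarrow> dnum" where
  "dmult u v = (fst u * fst v, fst u * snd v + snd u * fst v)"

lemma dinner_commute: "dinner X Y = dinner Y X"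
  by (simp add: dinner_def inner_commute)

lemma bilinear_dinner: "bilinear dinner"
  by (auto simp: bilinear_def dinner_def inner_add_left inner_add_right algebra_simps
      intro!: linearI)

lemma bilinear_dcross: "bilinear dcross"
  by (auto simp: bilinear_def dcross_def cross3_simps algebra_simps intro!: linearI)

lemma dinner_dcross_dcross:
  "dinner (dcross A B) (dcross C D)
    = dmult (dinner A C) (dinner B D) - dmult (dinner A D) (dinner B C)"
  by (simp add: dinner_def dcross_def dmult_def cross3_simps inner_add_left inner_add_right
      algebra_simps)

lemma has_vector_derivative_dderiv:
  assumes "c differentiable at t"
  shows "(c has_vector_derivative dderiv c t) (at t)"
proof -
  have "(\<lambda>s. fst (c s)) differentiable at t" "(\<lambda>s. snd (c s)) differentiable at t"
    using assms
    by (auto intro: differentiable_compose[OF bounded_linear_imp_differentiable]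
        bounded_linear_fst bounded_linear_snd)
  then have "((\<lambda>s. (fst (c s), snd (c s))) has_vector_derivative dderiv c t) (at t)"
    unfolding dderiv_def by (intro has_vector_derivative_Pair vector_derivative_works[THEN iffD1])
  then show ?thesis by simp
qed

lemma dderiv_unique:
  assumes "(c has_vector_derivative D) (at t)"
  shows "dderiv c t = D"
  using has_vector_derivative_dderiv[OF differentiableI_vector[OF assms]] assms
  by (rule vector_derivative_unique_at)

lemma dderiv_dcross:
  assumes "A differentiable at t" "B differentiable at t"
  shows "dderiv (\<lambda>s. dcross (A s) (B s)) t = dcross (A t) (dderiv B t) + dcross (dderiv A t) (B t)"
  by (intro dderiv_unique bounded_bilinear.has_vector_derivative has_vector_derivative_dderiv assms
      bilinear_dcross[unfolded bilinear_conv_bounded_bilinear])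

lemma dinner_const_imp_dderiv_sum_eq_0:
  assumes "\<And>s. dinner (A s) (B s) = k" "A differentiable at t" "B differentiable at t"
  shows "dinner (A t) (dderiv B t) + dinner (dderiv A t) (B t) = 0"
proof -
  have "((\<lambda>s. dinner (A s) (B s)) has_vector_derivative
      dinner (A t) (dderiv B t) + dinner (dderiv A t) (B t)) (at t)"
    by (intro bounded_bilinear.has_vector_derivative has_vector_derivative_dderiv assms
        bilinear_dinner[unfolded bilinear_conv_bounded_bilinear])
  moreover have "((\<lambda>s. dinner (A s) (B s)) has_vector_derivative 0) (at t)"
    using assms(1) by simp
  ultimately show ?thesis by (rule vector_derivative_unique_at)
qed

lemma ddet_dderiv_dcross_unit_director:
  assumes unit: "\<And>s. dinner (A s) (A s) = (1, 0)"
    and orth: "\<And>s. dinner (A s) (B s) = (0, 0)"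
    and diff: "A differentiable at t" "B differentiable at t"
  shows "ddet (dderiv (\<lambda>s. dcross (A s) (B s)) t) (A t) (dderiv A t)
    = dinner (dderiv A t) (dderiv B t)"
proof -
  have "dinner (A t) (dderiv A t) + dinner (A t) (dderiv A t) = 0"
    using dinner_const_imp_dderiv_sum_eq_0[OF unit diff(1) diff(1)] by (simp add: dinner_commute)
  then have A_A': "dinner (A t) (dderiv A t) = 0"
    by (simp add: prod_eq_iff)
  have "dinner (dcross (A t) (dderiv B t)) (dcross (A t) (dderiv A t))
      = dinner (dderiv A t) (dderiv B t)"
    by (simp add: dinner_dcross_dcross unit A_A' dmult_def prod_eq_iff dinner_commute)
  moreover have "dinner (dcross (dderiv A t) (B t)) (dcross (A t) (dderiv A t)) = 0"
    using orth[of t] by (simp add: dinner_dcross_dcross dinner_commute A_A' dmult_def prod_eq_iff)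
  ultimately show ?thesis
    by (simp add: ddet_def dderiv_dcross diff bilinear_ladd[OF bilinear_dinner])
qed

theorem proposition1:
  fixes a0 a1 a2 a3 :: "real \<Rightarrow> real^3"
  assumes diff: "\<And>t. a0 differentiable at t" "\<And>t. a1 differentiable at t"
                "\<And>t. a2 differentiable at t" "\<And>t. a3 differentiable at t"
    and sph: "\<And>t. ((a0 t, a1 t), (a2 t, a3 t)) \<in> hd_unit_sphere"
  shows "developable (\<lambda>t. dcross (a0 t, a1 t) (a2 t, a3 t)) (\<lambda>t. (a0 t, a1 t))
     \<longleftrightarrow> (\<forall>t. vector_derivative a0 (at t) \<bullet> vector_derivative a2 (at t) = 0
            \<and> vector_derivative a0 (at t) \<bullet> vector_derivative a3 (at t)
              = - (vector_derivative a1 (at t) \<bullet> vector_derivative a2 (at t)))"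
proof -
  have "ddet (dderiv (\<lambda>s. dcross (a0 s, a1 s) (a2 s, a3 s)) t) (a0 t, a1 t)
        (dderiv (\<lambda>s. (a0 s, a1 s)) t)
      = dinner (dderiv (\<lambda>s. (a0 s, a1 s)) t) (dderiv (\<lambda>s. (a2 s, a3 s)) t)" for t
    using sph by (intro ddet_dderiv_dcross_unit_director differentiable_Pair diff)
      (auto simp: hd_unit_sphere_def)
  then show ?thesis
    by (auto simp: developable_def dderiv_def dinner_def add_eq_0_iff)
qed

end
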